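(* In the setting below, let $F:\widehat{A}\to\widehat{A}'$ and $G:\widehat{A}'\to\widehat{A}''$ be $\mathcal{A}_\infty$-morphisms with $F_n=G_n=0$ for $n>2$ and with $F_2=0$ or $G_2=0$. Then \[ (G\circ F)\boxtimes\mathrm{id}_{DD}=(G\boxtimes\mathrm{id}_{DD})\circ(F\boxtimes\mathrm{id}_{DD}). \]
   Context: $\mathcal{I}=\mathbb{Z}e_1\times\cdots\times\mathbb{Z}e_k$; $\mathcal{B},\mathcal{B}'$ differential bigraded algebras over $\mathcal{I}$ (bigraded by intrinsic and homological degree $\deg_h$, degree-$(0,0)$ part $\mathcal{I}$, differential $\mu_1$ of bidegree $(0,1)$, $\mu_1^2=0$, $\mu_1(xy)=(-1)^{\deg_hy}\mu_1(x)y+x\mu_1(y)$, multiplication $\mu_2$). $\widehat{A},\widehat{A}',\widehat{A}''$ are right dg $\mathcal{B}$-modules (differential $m_1$ of bidegree $(0,1)$, $m_1^2=0$, $m_1(xb)=(-1)^{\deg_hb}m_1(x)b+x\mu_1(b)$, action $m_2$), free over $\mathbb{Z}$ with bases of homogeneous elements with unique right idempotents. $|\mathrm{id}|$ multiplies by $(-1)^{\deg_h}$. $\widehat{DD}=\mathcal{I}$ is a rank-one Type DD bimodule with $\delta_{DD}(1)=\sum_sa_s\otimes c_s^{op}\in\mathcal{B}\otimes_{\mathcal{I}}(\mathcal{B}')^{op}$ of bidegree $(0,1)$ satisfying $\sum_s(-1)^{\deg_hc_s}\mu_1(a_s)\otimes c_s^{op}+\sum_sa_s\otimes\mu_1(c_s)^{op}+\sum_{s,t}(-1)^{\deg_h(a_t)\deg_h(c_s)}a_sa_t\otimes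 c_t^{op}c_s^{op}=0$. $\widehat{A}\boxtimes\widehat{DD}$ is the Type D structure over $\mathcal{B}'$ on $\widehat{A}$ with $\delta(x)=1\otimes m_1(x)+\sum_s(-1)^{\deg_h(xa_s)\deg_h(c_s)}c_s\otimes xa_s$. An $\mathcal{A}_\infty$-morphism $F$ with $F_n=0$ for $n>2$: bigrading-preserving $\mathcal{I}$-linear $F_1$ and $\mathcal{I}$-linear $F_2:\widehat{A}\otimes_{\mathcal{I}}\mathcal{B}\to\widehat{A}'$ (intrinsic-degree preserving, lowering $\deg_h$ by one) with $m_1'F_1=F_1m_1$, $m_1'F_2+m_2'(F_1\otimes\mathrm{id})=F_1m_2-F_2(m_1\otimes|\mathrm{id}|)-F_2(\mathrm{id}\otimes\mu_1)$, $-m_2'(F_2\otimes|\mathrm{id}|)=F_2(m_2\otimes\mathrm{id})-F_2(\mathrm{id}\otimes\mu_2)$. Composition of $\mathcal{A}_\infty$-morphisms: $(G\circ F)_n=\sum_{i+j=n+1}(-1)^{(i+1)(j+1)}G_i\circ(F_j\otimes|\mathrm{id}|^{(j+1)\otimes(i-1)})$; under the hypotheses this gives $(G\circ F)_1=G_1F_1$, $(G\circ F)_2=G_1F_2+G_2(F_1\otimes\mathrm{id})$, and $(G\circ F)_n=0$ for $n>2$. $F\boxtimes\mathrm{id}_{DD}:\widehat{A}\to\mathcal{B}'\otimes\widehat{A}'$ is $x\mapsto1\otimes F_1(x)+\sum_s(-1)^{\deg_h(c_s)(1+\deg_hF_2(x\otimes a_s))}c_s\otimes F_2(x\otimes a_s)$.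 Composition of Type D morphisms $\Phi:D\to\mathcal{B}'\otimes D'$, $\Psi:D'\to\mathcal{B}'\otimes D''$ is $\Psi\circ\Phi:=(\mu_2\otimes\mathrm{id})\circ(\mathrm{id}\otimes\Psi)\circ\Phi$. *)

theory Defs
  imports Main "HOL-Library.Poly_Mapping"
begin

definition signed :: "int \<Rightarrow> 'a::ab_group_add \<Rightarrow> 'a" where
  "signed n a = (if even n then a else - a)"

(* ---------- Differential bigraded algebras over I = Z e_0 x ... x Z e_(k-1) ----------
   G q h = the homogeneous elements of intrinsic degree q and homological degree h *)

definition bigraded_ring :: "(int \<Rightarrow> int \<Rightarrow> 'b::ring_1 set) \<Rightarrow> bool" where
  "bigraded_ring G \<longleftrightarrow>
     (\<forall>q h. 0 \<in> G q h \<and> (\<forall>a\<in>G q h. \<forall>b\<in>G q h. a + b \<in> G q h \<and> - a \<in> G q h)) \<and>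
     (\<forall>a. \<exists>S c. finite S \<and> (\<forall>p\<in>S. c p \<in> G (fst p) (snd p)) \<and> a = (\<Sum>p\<in>S. c p)) \<and>
     (\<forall>S c. finite S \<and> (\<forall>p\<in>S. c p \<in> G (fst p) (snd p)) \<and> (\<Sum>p\<in>S. c p) = 0
              \<longrightarrow> (\<forall>p\<in>S. c p = 0)) \<and>
     (\<forall>q h q' h' a b. a \<in> G q h \<longrightarrow> b \<in> G q' h' \<longrightarrow> a * b \<in> G (q + q') (h + h'))"

definition over_I :: "(int \<Rightarrow> int \<Rightarrow> 'b::ring_1 set) \<Rightarrow> (nat \<Rightarrow> 'b) \<Rightarrow> nat \<Rightarrow> bool" where
  "over_I G e k \<longleftrightarrow>
     (\<forall>i<k. \<forall>j<k. e i * e j = (if i = j then e i else 0)) \<and>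
     (\<Sum>i<k. e i) = 1 \<and>
     (\<forall>n. (\<Sum>i<k. of_int (n i) * e i) = 0 \<longrightarrow> (\<forall>i<k. n i = 0)) \<and>
     G 0 0 = {(\<Sum>i<k. of_int (n i) * e i) | n. True}"

definition hdeg :: "(int \<Rightarrow> int \<Rightarrow> 'b set) \<Rightarrow> 'b \<Rightarrow> int" where
  "hdeg G a = (SOME h. \<exists>q. a \<in> G q h)"

definition dg_bigraded_algebra ::
  "(int \<Rightarrow> int \<Rightarrow> 'b::ring_1 set) \<Rightarrow> ('b \<Rightarrow> 'b) \<Rightarrow> (nat \<Rightarrow> 'b) \<Rightarrow> nat \<Rightarrow> bool" where
  "dg_bigraded_algebra G mu1 e k \<longleftrightarrow>
     bigraded_ring G \<and> over_I G e k \<and>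
     (\<forall>a b. mu1 (a + b) = mu1 a + mu1 b) \<and>
     (\<forall>q h a. a \<in> G q h \<longrightarrow> mu1 a \<in> G q (h + 1)) \<and>
     (\<forall>a. mu1 (mu1 a) = 0) \<and>
     (\<forall>q h a b. b \<in> G q h \<longrightarrow> mu1 (a * b) = signed h (mu1 a * b) + a * mu1 b)"

(* ---------- Right dg modules, free over Z on a basis 'x of homogeneous elements ----------
   gr, dh : bidegree of basis elements; idem : index of the (unique) right idempotent *)

definition homogM :: "('x \<Rightarrow> int) \<Rightarrow> ('x \<Rightarrow> int) \<Rightarrow> int \<Rightarrow> int \<Rightarrow> ('x \<Rightarrow>\<^sub>0 int) \<Rightarrow> bool" where
  "homogM gr dh q h z \<longleftrightarrow> (\<forall>x\<in>Poly_Mapping.keys z. gr x = q \<and> dh x = h)"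

definition hdegM :: "('x \<Rightarrow> int) \<Rightarrow> ('x \<Rightarrow> int) \<Rightarrow> ('x \<Rightarrow>\<^sub>0 int) \<Rightarrow> int" where
  "hdegM gr dh z = (SOME h. \<exists>q. homogM gr dh q h z)"

definition dg_module ::
  "(int \<Rightarrow> int \<Rightarrow> 'b::ring_1 set) \<Rightarrow> ('b \<Rightarrow> 'b) \<Rightarrow> (nat \<Rightarrow> 'b) \<Rightarrow> nat \<Rightarrow>
   ('x \<Rightarrow> int) \<Rightarrow> ('x \<Rightarrow> int) \<Rightarrow> ('x \<Rightarrow> nat) \<Rightarrow>
   (('x \<Rightarrow>\<^sub>0 int) \<Rightarrow> 'b \<Rightarrow> ('x \<Rightarrow>\<^sub>0 int)) \<Rightarrow> (('x \<Rightarrow>\<^sub>0 int) \<Rightarrow> ('x \<Rightarrow>\<^sub>0 int)) \<Rightarrow> bool" where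
  "dg_module G mu1 e k gr dh idem m2 m1 \<longleftrightarrow>
     (\<forall>x. idem x < k \<and> (\<forall>i<k. m2 (frag_of x) (e i) = (if i = idem x then frag_of x else 0))) \<and>
     (\<forall>z z' b. m2 (z + z') b = m2 z b + m2 z' b) \<and>
     (\<forall>z b b'. m2 z (b + b') = m2 z b + m2 z b') \<and>
     (\<forall>z b b'. m2 (m2 z b) b' = m2 z (b * b')) \<and>
     (\<forall>z. m2 z 1 = z) \<and>
     (\<forall>z b q h q' h'. homogM gr dh q h z \<longrightarrow> b \<in> G q' h' \<longrightarrow>
                       homogM gr dh (q + q') (h + h') (m2 z b)) \<and>
     (\<forall>z z'. m1 (z + z') = m1 z + m1 z') \<and>
     (\<forall>z q h. homogM gr dh q h z \<longrightarrow> homogM gr dh q (h + 1) (m1 z)) \<and>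
     (\<forall>z. m1 (m1 z) = 0) \<and>
     (\<forall>z b q h. b \<in> G q h \<longrightarrow> m1 (m2 z b) = signed h (m2 (m1 z) b) + m2 z (mu1 b))"

(* ---------- A-infinity morphisms F with F_n = 0 for n > 2, given by (F1, F2) ---------- *)

definition ainf_morphism ::
  "(int \<Rightarrow> int \<Rightarrow> 'b::ring_1 set) \<Rightarrow> ('b \<Rightarrow> 'b) \<Rightarrow> (nat \<Rightarrow> 'b) \<Rightarrow> nat \<Rightarrow>
   ('x \<Rightarrow> int) \<Rightarrow> ('x \<Rightarrow> int) \<Rightarrow>
   (('x \<Rightarrow>\<^sub>0 int) \<Rightarrow> 'b \<Rightarrow> ('x \<Rightarrow>\<^sub>0 int)) \<Rightarrow> (('x \<Rightarrow>\<^sub>0 int) \<Rightarrow> ('x \<Rightarrow>\<^sub>0 int)) \<Rightarrow>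
   ('y \<Rightarrow> int) \<Rightarrow> ('y \<Rightarrow> int) \<Rightarrow>
   (('y \<Rightarrow>\<^sub>0 int) \<Rightarrow> 'b \<Rightarrow> ('y \<Rightarrow>\<^sub>0 int)) \<Rightarrow> (('y \<Rightarrow>\<^sub>0 int) \<Rightarrow> ('y \<Rightarrow>\<^sub>0 int)) \<Rightarrow>
   (('x \<Rightarrow>\<^sub>0 int) \<Rightarrow> ('y \<Rightarrow>\<^sub>0 int)) \<Rightarrow> (('x \<Rightarrow>\<^sub>0 int) \<Rightarrow> 'b \<Rightarrow> ('y \<Rightarrow>\<^sub>0 int)) \<Rightarrow> bool" where
  "ainf_morphism G mu1 e k gr dh m2 m1 gr' dh' m2' m1' F1 F2 \<longleftrightarrow>
     (\<forall>z z'. F1 (z + z') = F1 z + F1 z') \<and>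
     (\<forall>z q h. homogM gr dh q h z \<longrightarrow> homogM gr' dh' q h (F1 z)) \<and>
     (\<forall>z i. i < k \<longrightarrow> F1 (m2 z (e i)) = m2' (F1 z) (e i)) \<and>
     (\<forall>z z' b. F2 (z + z') b = F2 z b + F2 z' b) \<and>
     (\<forall>z b b'. F2 z (b + b') = F2 z b + F2 z b') \<and>
     (\<forall>z b i. i < k \<longrightarrow> F2 (m2 z (e i)) b = F2 z (e i * b)) \<and>
     (\<forall>z b i. i < k \<longrightarrow> F2 z (b * e i) = m2' (F2 z b) (e i)) \<and>
     (\<forall>z b q h q' h'. homogM gr dh q h z \<longrightarrow> b \<in> G q' h' \<longrightarrow>
                       homogM gr' dh' (q + q') (h + h' - 1) (F2 z b)) \<and>
     (\<forall>z. m1' (F1 z) = F1 (m1 z)) \<and>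
     (\<forall>z b q h. b \<in> G q h \<longrightarrow>
        m1' (F2 z b) + m2' (F1 z) b = F1 (m2 z b) - F2 (m1 z) (signed h b) - F2 z (mu1 b)) \<and>
     (\<forall>z b b' q h q' h'. b \<in> G q h \<longrightarrow> b' \<in> G q' h' \<longrightarrow>
        - m2' (F2 z b) (signed h' b') = F2 (m2 z b) b' - F2 z (b * b'))"

definition ainf_comp1 where "ainf_comp1 G1 F1 = (\<lambda>z. G1 (F1 z))"
definition ainf_comp2 where "ainf_comp2 G1 G2 F1 F2 = (\<lambda>z b. G1 (F2 z b) + G2 (F1 z) b)"

(* ---------- Tensor products over I ----------
   Elements of M \<otimes>_I N are represented by formal Z-combinations of pairs, i.e. elements of
   (M x N) =>0 int, modulo the subgroup generated by biadditivity and I-balancing relations.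
   R a i = a . e_i (right I-action on M), L i n = e_i . n (left I-action on N). *)

inductive_set gen_subgroup :: "'a::ab_group_add set \<Rightarrow> 'a set" for R where
  gen_zero: "0 \<in> gen_subgroup R"
| gen_base: "r \<in> R \<Longrightarrow> r \<in> gen_subgroup R"
| gen_diff: "x \<in> gen_subgroup R \<Longrightarrow> y \<in> gen_subgroup R \<Longrightarrow> x - y \<in> gen_subgroup R"

definition tensor_rels ::
  "('m::ab_group_add \<Rightarrow> nat \<Rightarrow> 'm) \<Rightarrow> (nat \<Rightarrow> 'n::ab_group_add \<Rightarrow> 'n) \<Rightarrow> nat \<Rightarrow> (('m \<times> 'n) \<Rightarrow>\<^sub>0 int) set" where
  "tensor_rels R L k =
     {frag_of (a + a', b) - frag_of (a, b) - frag_of (a', b) | a a' b. True} \<union>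
     {frag_of (a, b + b') - frag_of (a, b) - frag_of (a, b') | a b b'. True} \<union>
     {frag_of (R a i, b) - frag_of (a, L i b) | a b i. i < k}"

definition tensor_eq ::
  "('m::ab_group_add \<Rightarrow> nat \<Rightarrow> 'm) \<Rightarrow> (nat \<Rightarrow> 'n::ab_group_add \<Rightarrow> 'n) \<Rightarrow> nat \<Rightarrow>
   (('m \<times> 'n) \<Rightarrow>\<^sub>0 int) \<Rightarrow> (('m \<times> 'n) \<Rightarrow>\<^sub>0 int) \<Rightarrow> bool" where
  "tensor_eq R L k s t \<longleftrightarrow> s - t \<in> gen_subgroup (tensor_rels R L k)"

(* ---------- The Type DD identity element delta_DD(1) = Sum_s a_s (x) c_s^op ----------
   given as a list ds of pairs (a_s, c_s); B'^op carries the same bigrading as B'. *)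

definition DD_relation_term ::
  "(int \<Rightarrow> int \<Rightarrow> 'b::ring_1 set) \<Rightarrow> ('b \<Rightarrow> 'b) \<Rightarrow>
   (int \<Rightarrow> int \<Rightarrow> 'c::ring_1 set) \<Rightarrow> ('c \<Rightarrow> 'c) \<Rightarrow> ('b \<times> 'c) list \<Rightarrow> (('b \<times> 'c) \<Rightarrow>\<^sub>0 int)" where
  "DD_relation_term G mu1 G' mu1' ds =
     (\<Sum>(a, c)\<leftarrow>ds. frag_of (signed (hdeg G' c) (mu1 a), c)) +
     (\<Sum>(a, c)\<leftarrow>ds. frag_of (a, mu1' c)) +
     (\<Sum>(as, cs)\<leftarrow>ds. \<Sum>(at, ct)\<leftarrow>ds. frag_of (signed (hdeg G at * hdeg G' cs) (as * at), cs * ct))"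

definition DD_identity ::
  "(int \<Rightarrow> int \<Rightarrow> 'b::ring_1 set) \<Rightarrow> ('b \<Rightarrow> 'b) \<Rightarrow> (nat \<Rightarrow> 'b) \<Rightarrow>
   (int \<Rightarrow> int \<Rightarrow> 'c::ring_1 set) \<Rightarrow> ('c \<Rightarrow> 'c) \<Rightarrow> (nat \<Rightarrow> 'c) \<Rightarrow> nat \<Rightarrow> ('b \<times> 'c) list \<Rightarrow> bool" where
  "DD_identity G mu1 e G' mu1' e' k ds \<longleftrightarrow>
     (\<forall>(a, c)\<in>set ds. \<exists>q h q' h'. a \<in> G q h \<and> c \<in> G' q' h' \<and> q + q' = 0 \<and> h + h' = 1) \<and>
     tensor_eq (\<lambda>a i. a * e i) (\<lambda>i c. c * e' i) k (DD_relation_term G mu1 G' mu1' ds) 0"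

definition box_id ::
  "(int \<Rightarrow> int \<Rightarrow> 'c::ring_1 set) \<Rightarrow> ('y \<Rightarrow> int) \<Rightarrow> ('y \<Rightarrow> int) \<Rightarrow>
   (('x \<Rightarrow>\<^sub>0 int) \<Rightarrow> ('y \<Rightarrow>\<^sub>0 int)) \<Rightarrow> (('x \<Rightarrow>\<^sub>0 int) \<Rightarrow> 'b \<Rightarrow> ('y \<Rightarrow>\<^sub>0 int)) \<Rightarrow>
   ('b \<times> 'c) list \<Rightarrow> 'x \<Rightarrow> (('c \<times> ('y \<Rightarrow>\<^sub>0 int)) \<Rightarrow>\<^sub>0 int)" where
  "box_id G' gr' dh' F1 F2 ds x =
     frag_of (1, F1 (frag_of x)) +
     (\<Sum>(a, c)\<leftarrow>ds. frag_of (signed (hdeg G' c * (1 + hdegM gr' dh' (F2 (frag_of x) a))) c,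
                               F2 (frag_of x) a))"

(* composition Psi o Phi := (mu_2 \<otimes> id) o (id \<otimes> Psi) o Phi, with Psi extended Z-linearly *)
definition typeD_comp ::
  "('y \<Rightarrow> (('c::ring_1 \<times> ('z \<Rightarrow>\<^sub>0 int)) \<Rightarrow>\<^sub>0 int)) \<Rightarrow>
   ('x \<Rightarrow> (('c \<times> ('y \<Rightarrow>\<^sub>0 int)) \<Rightarrow>\<^sub>0 int)) \<Rightarrow> 'x \<Rightarrow> (('c \<times> ('z \<Rightarrow>\<^sub>0 int)) \<Rightarrow>\<^sub>0 int)" where
  "typeD_comp Psi Phi x =
     frag_extend (\<lambda>(b, y). frag_extend (\<lambda>w. frag_extend (\<lambda>(c, z). frag_of (b * c, z)) (Psi w)) y) (Phi x)"

end

theory Submission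
  imports Defs
begin

(* Evaluate both sides on a basis element x of homological degree h.  The sign in F box id_DD
   is read off the degree of F_2(x (x) a_s), a junk value when that element is zero; but then
   c_s (x) 0 vanishes in the tensor product, so F box id_DD agrees there with the same sum carrying
   the explicit sign (-1)^(|c_s| (h + |a_s|)), and that sum is additive in x.
   If F_2 = 0, the composite on the right is G box id_DD extended linearly along F_1, i.e. the
   explicit sum for (G_1 F_1, G_2 F_1).  If G_2 = 0, then G box id_DD is 1 (x) G_1, so the right
   side is id (x) G_1 applied to F box id_DD; this is well defined on B' (x)_I A' because G_1 is
   additive and I-linear.  No product a_s a_t of two DD-coefficients ever occurs, so neither the
   DD relation nor the A-infinity relations of F and G are needed. *)

lemma gen_subgroup_add:
  "x \<in> gen_subgroup S \<Longrightarrow> y \<in> gen_subgroup S \<Longrightarrow> x + y \<in> gen_subgroup S"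
  by (metis diff_0 diff_minus_eq_add gen_diff gen_zero)

lemma gen_subgroup_uminus: "x \<in> gen_subgroup S \<Longrightarrow> - x \<in> gen_subgroup S"
  by (metis diff_0 gen_diff gen_zero)

lemma gen_subgroup_image:
  assumes diff: "\<And>x y. f (x - y) = f x - f y"
    and base: "\<And>r. r \<in> S \<Longrightarrow> f r \<in> gen_subgroup S'"
    and x: "x \<in> gen_subgroup S"
  shows "f x \<in> gen_subgroup S'"
  using x
proof induction
  case gen_zero
  have "f 0 = 0" using diff[of 0 0] by simp
  then show ?case by (simp add: gen_subgroup.gen_zero)
qed (simp_all add: base diff gen_subgroup.gen_diff)

lemma tensor_eq_refl: "tensor_eq R L k s s"
  by (simp add: tensor_eq_def gen_zero)

lemma tensor_eq_sym: "tensor_eq R L k s t \<Longrightarrow> tensor_eq R L k t s"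
  unfolding tensor_eq_def by (metis gen_subgroup_uminus minus_diff_eq)

lemma tensor_eq_add:
  "tensor_eq R L k s t \<Longrightarrow> tensor_eq R L k s' t' \<Longrightarrow> tensor_eq R L k (s + s') (t + t')"
  unfolding tensor_eq_def by (drule (1) gen_subgroup_add) (simp add: algebra_simps)

lemma tensor_eq_diff:
  "tensor_eq R L k s t \<Longrightarrow> tensor_eq R L k s' t' \<Longrightarrow> tensor_eq R L k (s - s') (t - t')"
  unfolding tensor_eq_def by (drule (1) gen_diff) (simp add: algebra_simps)

lemma tensor_eq_trans [trans]:
  "tensor_eq R L k s t \<Longrightarrow> tensor_eq R L k t u \<Longrightarrow> tensor_eq R L k s u"
  unfolding tensor_eq_def by (drule (1) gen_subgroup_add) simp

lemma tensor_eq_sum_list: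
  "(\<And>p. p \<in> set ps \<Longrightarrow> tensor_eq R L k (f p) (g p)) \<Longrightarrow>
   tensor_eq R L k (\<Sum>p\<leftarrow>ps. f p) (\<Sum>p\<leftarrow>ps. g p)"
  by (induction ps) (simp_all add: tensor_eq_refl tensor_eq_add)

lemma tensor_eq_frag_of_right_diff:
  "tensor_eq R L k (frag_of (a, u - v)) (frag_of (a, u) - frag_of (a, v))"
proof -
  have "frag_of (a, (u - v) + v) - frag_of (a, u - v) - frag_of (a, v) \<in> tensor_rels R L k"
    unfolding tensor_rels_def by blast
  then have "- (frag_of (a, u) - frag_of (a, u - v) - frag_of (a, v)) \<in> gen_subgroup (tensor_rels R L k)"
    by (intro gen_subgroup_uminus gen_base) simp
  then show ?thesis unfolding tensor_eq_def by (simp add: algebra_simps)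
qed

lemma tensor_eq_frag_of_right_zero: "tensor_eq R L k (frag_of (a, 0)) 0"
  using tensor_eq_frag_of_right_diff[of R L k a 0 0] by simp

lemma tensor_eq_frag_extend_cong:
  assumes "Poly_Mapping.keys y \<subseteq> S" and "\<And>w. w \<in> S \<Longrightarrow> tensor_eq R L k (f w) (g w)"
  shows "tensor_eq R L k (frag_extend f y) (frag_extend g y)"
  using assms(1)
proof (induction y rule: frag_induction)
  case zero
  then show ?case by (simp add: tensor_eq_refl)
next
  case (one w)
  then show ?case using assms(2) by simp
next
  case (diff u v)
  then show ?case by (simp add: frag_extend_diff tensor_eq_diff)
qed

lemma tensor_eq_frag_extend_right_additive:
  assumes add: "\<And>u v. f (u + v) = f u + f v"
  shows "tensor_eq R L k (frag_extend (\<lambda>w. frag_of (a, f (frag_of w))) y) (frag_of (a, f y))"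
proof -
  have f_diff: "f (u - v) = f u - f v" for u v
    using add[of "u - v" v] by (simp add: algebra_simps)
  have "Poly_Mapping.keys y \<subseteq> UNIV" by simp
  then show ?thesis
  proof (induction y rule: frag_induction)
    case zero
    have "f 0 = 0" using f_diff[of 0 0] by simp
    then show ?case by (simp add: tensor_eq_sym[OF tensor_eq_frag_of_right_zero])
  next
    case (one w)
    then show ?case by (simp add: tensor_eq_refl)
  next
    case (diff u v)
    then have "tensor_eq R L k (frag_extend (\<lambda>w. frag_of (a, f (frag_of w))) (u - v))
                 (frag_of (a, f u) - frag_of (a, f v))"
      by (simp add: frag_extend_diff tensor_eq_diff)
    also have "tensor_eq R L k \<dots> (frag_of (a, f (u - v)))"
      by (simp add: f_diff tensor_eq_sym[OF tensor_eq_frag_of_right_diff])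
    finally show ?case .
  qed
qed

definition tensor_map :: "('a \<Rightarrow> 'c) \<Rightarrow> ('b \<Rightarrow> 'd) \<Rightarrow> ('a \<times> 'b \<Rightarrow>\<^sub>0 int) \<Rightarrow> ('c \<times> 'd \<Rightarrow>\<^sub>0 int)" where
  "tensor_map f g u = frag_extend (\<lambda>(a, b). frag_of (f a, g b)) u"

lemma tensor_map_frag_of [simp]: "tensor_map f g (frag_of (a, b)) = frag_of (f a, g b)"
  by (simp add: tensor_map_def)

lemma tensor_map_diff: "tensor_map f g (u - v) = tensor_map f g u - tensor_map f g v"
  by (simp add: tensor_map_def frag_extend_diff)

lemma tensor_eq_tensor_map:
  assumes f_add: "\<And>a a'. f (a + a') = f a + f a'"
    and g_add: "\<And>b b'. g (b + b') = g b + g b'"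
    and f_R: "\<And>a i. i < k \<Longrightarrow> f (R a i) = R' (f a) i"
    and g_L: "\<And>b i. i < k \<Longrightarrow> g (L i b) = L' i (g b)"
    and st: "tensor_eq R L k s t"
  shows "tensor_eq R' L' k (tensor_map f g s) (tensor_map f g t)"
proof -
  have "tensor_map f g r \<in> tensor_rels R' L' k" if "r \<in> tensor_rels R L k" for r
    using that unfolding tensor_rels_def
    by (elim UnE CollectE exE conjE) (simp_all add: tensor_map_diff f_add g_add f_R g_L; blast)+
  then have "tensor_map f g (s - t) \<in> gen_subgroup (tensor_rels R' L' k)"
    using st unfolding tensor_eq_def by (blast intro: gen_subgroup_image tensor_map_diff gen_base)
  then show ?thesis unfolding tensor_eq_def by (simp add: tensor_map_diff)
qed

lemma frag_extend_sum_list: "frag_extend f (\<Sum>p\<leftarrow>ps. g p) = (\<Sum>p\<leftarrow>ps. frag_extend f (g p))"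
  by (induction ps) (simp_all add: frag_extend_add)

lemma frag_extend_fun_add: "frag_extend (\<lambda>w. f w + g w) y = frag_extend f y + frag_extend g y"
  by (simp add: frag_extend_def sum.distrib frag_cmul_distrib2)

lemma frag_extend_fun_sum_list:
  "frag_extend (\<lambda>w. \<Sum>p\<leftarrow>ps. h p w) y = (\<Sum>p\<leftarrow>ps. frag_extend (h p) y)"
  by (induction ps) (simp_all add: frag_extend_fun_add frag_extend_eq_0)

lemma homogM_add:
  "homogM gr dh q h z \<Longrightarrow> homogM gr dh q h z' \<Longrightarrow> homogM gr dh q h (z + z')"
  unfolding homogM_def using keys_add[of z z'] by blast

lemma hdegM_eq:
  assumes "homogM gr dh q h z" and "z \<noteq> 0"
  shows "hdegM gr dh z = h"
proof -
  obtain w where w: "w \<in> Poly_Mapping.keys z" using assms(2) by (metis keys_eq_empty ex_in_conv)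
  have "\<exists>q. homogM gr dh q (hdegM gr dh z) z"
    unfolding hdegM_def by (rule someI_ex) (use assms(1) in blast)
  then show ?thesis using assms(1) w unfolding homogM_def by metis
qed

(* On y = 0 the degree hdegM is an arbitrary choice, but there c (x) y vanishes anyway. *)
lemma tensor_eq_signed_hdegM:
  assumes "homogM gr dh q h y"
  shows "tensor_eq R L k (frag_of (signed (d * (1 + hdegM gr dh y)) c, y))
                         (frag_of (signed (d * (1 + h)) c, y))"
proof (cases "y = 0")
  case True
  then show ?thesis
    by (metis tensor_eq_frag_of_right_zero tensor_eq_sym tensor_eq_trans)
next
  case False
  then show ?thesis using hdegM_eq[OF assms] by (simp add: tensor_eq_refl)
qed

lemma DD_identity_hdeg_left:
  assumes "DD_identity G mu1 e G' mu1' e' k ds" and "(a, c) \<in> set ds"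
  shows "\<exists>q. a \<in> G q (hdeg G a)"
proof -
  from assms obtain q h where "a \<in> G q h" unfolding DD_identity_def by fastforce
  then show ?thesis unfolding hdeg_def using someI_ex[of "\<lambda>h. \<exists>q. a \<in> G q h"] by blast
qed

lemma
  assumes "ainf_morphism G mu1 e k gr dh m2 m1 gr' dh' m2' m1' F1 F2"
  shows ainf_morphism_add1: "F1 (u + v) = F1 u + F1 v"
    and ainf_morphism_add2: "F2 (u + v) b = F2 u b + F2 v b"
    and ainf_morphism_homogM1: "homogM gr dh q h z \<Longrightarrow> homogM gr' dh' q h (F1 z)"
    and ainf_morphism_homogM2:
      "homogM gr dh q h z \<Longrightarrow> b \<in> G q' h' \<Longrightarrow> homogM gr' dh' (q + q') (h + h' - 1) (F2 z b)"
    and ainf_morphism_idem1: "i < k \<Longrightarrow> F1 (m2 z (e i)) = m2' (F1 z) (e i)"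
  using assms by (simp_all add: ainf_morphism_def)

lemma ainf_comp2_homogM:
  assumes F: "ainf_morphism G mu1 e k gr dh m2 m1 gr' dh' m2' m1' F1 F2"
    and G: "ainf_morphism G mu1 e k gr' dh' m2' m1' gr'' dh'' m2'' m1'' G1 G2"
    and z: "homogM gr dh q h z" and b: "b \<in> G q' h'"
  shows "homogM gr'' dh'' (q + q') (h + h' - 1) (ainf_comp2 G1 G2 F1 F2 z b)"
  unfolding ainf_comp2_def
  by (intro homogM_add ainf_morphism_homogM1[OF G] ainf_morphism_homogM2[OF G]
            ainf_morphism_homogM2[OF F] ainf_morphism_homogM1[OF F] z b)

(* F box id_DD on an element of homological degree h, with its sign made explicit; unlike box_id
   it is additive in the element. *)
definition box_id_deg ::
  "(int \<Rightarrow> int \<Rightarrow> 'b::ring_1 set) \<Rightarrow> (int \<Rightarrow> int \<Rightarrow> 'c::ring_1 set) \<Rightarrow> int \<Rightarrow>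
   (('x \<Rightarrow>\<^sub>0 int) \<Rightarrow> ('y \<Rightarrow>\<^sub>0 int)) \<Rightarrow> (('x \<Rightarrow>\<^sub>0 int) \<Rightarrow> 'b \<Rightarrow> ('y \<Rightarrow>\<^sub>0 int)) \<Rightarrow>
   ('b \<times> 'c) list \<Rightarrow> ('x \<Rightarrow>\<^sub>0 int) \<Rightarrow> ('c \<times> ('y \<Rightarrow>\<^sub>0 int) \<Rightarrow>\<^sub>0 int)" where
  "box_id_deg G G' h F1 F2 ds X =
     frag_of (1, F1 X) + (\<Sum>(a, c)\<leftarrow>ds. frag_of (signed (hdeg G' c * (h + hdeg G a)) c, F2 X a))"

lemma box_id_tensor_eq_box_id_deg:
  assumes F2_hom: "\<And>z b q h q' h'. homogM gr dh q h z \<Longrightarrow> b \<in> G q' h' \<Longrightarrow>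
                     homogM gr' dh' (q + q') (h + h' - 1) (F2 z b)"
    and ds_hom: "\<And>a c. (a, c) \<in> set ds \<Longrightarrow> \<exists>q. a \<in> G q (hdeg G a)"
  shows "tensor_eq R L k (box_id G' gr' dh' F1 F2 ds x) (box_id_deg G G' (dh x) F1 F2 ds (frag_of x))"
  unfolding box_id_def box_id_deg_def
proof (intro tensor_eq_add tensor_eq_refl tensor_eq_sum_list, clarify)
  fix a c assume "(a, c) \<in> set ds"
  then obtain q where "a \<in> G q (hdeg G a)" using ds_hom by blast
  then have "homogM gr' dh' (gr x + q) (dh x + hdeg G a - 1) (F2 (frag_of x) a)"
    using F2_hom[where z = "frag_of x"] by (simp add: homogM_def)
  from tensor_eq_signed_hdegM[OF this]
  show "tensor_eq R L k
          (frag_of (signed (hdeg G' c * (1 + hdegM gr' dh' (F2 (frag_of x) a))) c, F2 (frag_of x) a))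
          (frag_of (signed (hdeg G' c * (dh x + hdeg G a)) c, F2 (frag_of x) a))"
    by simp
qed

lemma frag_extend_box_id_deg:
  assumes F1_add: "\<And>u v. F1 (u + v) = F1 u + F1 v"
    and F2_add: "\<And>u v b. F2 (u + v) b = F2 u b + F2 v b"
  shows "tensor_eq R L k (frag_extend (\<lambda>w. box_id_deg G G' h F1 F2 ds (frag_of w)) y)
                         (box_id_deg G G' h F1 F2 ds y)"
  unfolding box_id_deg_def frag_extend_fun_add frag_extend_fun_sum_list
proof (intro tensor_eq_add tensor_eq_sum_list)
  show "tensor_eq R L k (frag_extend (\<lambda>w. frag_of (1, F1 (frag_of w))) y) (frag_of (1, F1 y))"
    using F1_add by (rule tensor_eq_frag_extend_right_additive)
next
  fix p
  show "tensor_eq R L k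
          (frag_extend (\<lambda>w. case p of (a, c) \<Rightarrow>
             frag_of (signed (hdeg G' c * (h + hdeg G a)) c, F2 (frag_of w) a)) y)
          (case p of (a, c) \<Rightarrow> frag_of (signed (hdeg G' c * (h + hdeg G a)) c, F2 y a))"
    by (cases p) (simp add: tensor_eq_frag_extend_right_additive[where f = "\<lambda>u. F2 u _"] F2_add)
qed

lemma box_id_zero_tensor_eq:
  "tensor_eq R L k (box_id G' gr dh F1 (\<lambda>z b. 0) ds x) (frag_of (1, F1 (frag_of x)))"
proof -
  have "tensor_eq R L k (box_id G' gr dh F1 (\<lambda>z b. 0) ds x)
                        (frag_of (1, F1 (frag_of x)) + (\<Sum>p\<leftarrow>ds. 0))"
    unfolding box_id_def
    by (intro tensor_eq_add tensor_eq_refl tensor_eq_sum_list)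
       (simp add: split_beta tensor_eq_frag_of_right_zero)
  then show ?thesis by simp
qed

lemma typeD_comp_box_id_zero:
  "typeD_comp Psi (box_id G' gr dh F1 (\<lambda>z b. 0) ds) x = frag_extend Psi (F1 (frag_of x))"
proof -
  have pair_frag_of: "(\<lambda>(c, z). frag_of (c, z)) = frag_of" by auto
  show ?thesis
    by (simp add: typeD_comp_def box_id_def frag_extend_add frag_extend_sum_list split_beta
                  pair_frag_of frag_expansion[symmetric])
qed

lemma typeD_comp_tensor_eq_tensor_map:
  assumes Psi: "\<And>w. tensor_eq (\<lambda>c i. c * e' i) L k (Psi w) (frag_of (1, G1 (frag_of w)))"
    and G1_add: "\<And>u v. G1 (u + v) = G1 u + G1 v"
  shows "tensor_eq (\<lambda>c i. c * e' i) L k (typeD_comp Psi Phi x) (tensor_map id G1 (Phi x))"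
proof -
  let ?te = "tensor_eq (\<lambda>c i. c * e' i) L k"
  have "?te (frag_extend (\<lambda>w. frag_extend (\<lambda>(c, z). frag_of (b * c, z)) (Psi w)) y)
            (frag_of (b, G1 y))" for b y
  proof -
    have "?te (frag_extend (\<lambda>w. frag_extend (\<lambda>(c, z). frag_of (b * c, z)) (Psi w)) y)
              (frag_extend (\<lambda>w. frag_of (b, G1 (frag_of w))) y)"
    proof (rule tensor_eq_frag_extend_cong[OF subset_UNIV])
      fix w
      have "?te (tensor_map ((*) b) id (Psi w)) (tensor_map ((*) b) id (frag_of (1, G1 (frag_of w))))"
        by (rule tensor_eq_tensor_map[OF _ _ _ _ Psi]) (simp_all add: distrib_left mult.assoc)
      then show "?te (frag_extend (\<lambda>(c, z). frag_of (b * c, z)) (Psi w)) (frag_of (b, G1 (frag_of w)))"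
        by (simp add: tensor_map_def)
    qed
    also have "?te \<dots> (frag_of (b, G1 y))"
      using G1_add by (rule tensor_eq_frag_extend_right_additive)
    finally show ?thesis .
  qed
  then show ?thesis
    unfolding typeD_comp_def tensor_map_def
    by (intro tensor_eq_frag_extend_cong[OF subset_UNIV]) (clarsimp simp only: id_apply)
qed

lemma box_id_ainf_comp_strict_first:
  assumes F: "ainf_morphism G mu1 e k gr dh m2 m1 gr' dh' m2' m1' F1 (\<lambda>z b. 0)"
    and G: "ainf_morphism G mu1 e k gr' dh' m2' m1' gr'' dh'' m2'' m1'' G1 G2"
    and ds_hom: "\<And>a c. (a, c) \<in> set ds \<Longrightarrow> \<exists>q. a \<in> G q (hdeg G a)"
  shows "tensor_eq R L k
           (box_id G' gr'' dh'' (ainf_comp1 G1 F1) (ainf_comp2 G1 G2 F1 (\<lambda>z b. 0)) ds x)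
           (typeD_comp (box_id G' gr'' dh'' G1 G2 ds) (box_id G' gr' dh' F1 (\<lambda>z b. 0) ds) x)"
proof -
  let ?te = "tensor_eq R L k" and ?X = "frag_of x"
  have G1_add: "\<And>u v. G1 (u + v) = G1 u + G1 v"
    and G2_add: "\<And>u v b. G2 (u + v) b = G2 u b + G2 v b"
    using ainf_morphism_add1[OF G] ainf_morphism_add2[OF G] by blast+
  have F1_hom: "homogM gr' dh' (gr x) (dh x) (F1 ?X)"
    by (rule ainf_morphism_homogM1[OF F]) (simp add: homogM_def)
  have "G1 0 = 0" using G1_add[of 0 0] by simp
  have "?te (box_id G' gr'' dh'' (ainf_comp1 G1 F1) (ainf_comp2 G1 G2 F1 (\<lambda>z b. 0)) ds x)
            (box_id_deg G G' (dh x) (ainf_comp1 G1 F1) (ainf_comp2 G1 G2 F1 (\<lambda>z b. 0)) ds ?X)"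
    by (rule box_id_tensor_eq_box_id_deg[OF ainf_comp2_homogM[OF F G] ds_hom])
  also have "\<dots> = box_id_deg G G' (dh x) G1 G2 ds (F1 ?X)"
    using \<open>G1 0 = 0\<close> by (simp add: box_id_deg_def ainf_comp1_def ainf_comp2_def)
  also have "?te \<dots> (frag_extend (\<lambda>w. box_id_deg G G' (dh x) G1 G2 ds (frag_of w)) (F1 ?X))"
    by (rule tensor_eq_sym[OF frag_extend_box_id_deg[where ?F1.0 = G1 and ?F2.0 = G2,
                                                     OF G1_add G2_add]])
  also have "?te \<dots> (frag_extend (box_id G' gr'' dh'' G1 G2 ds) (F1 ?X))"
  proof (rule tensor_eq_frag_extend_cong[OF order_refl])
    fix w assume "w \<in> Poly_Mapping.keys (F1 ?X)"
    then have "dh' w = dh x" using F1_hom by (simp add: homogM_def)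
    moreover have "?te (box_id_deg G G' (dh' w) G1 G2 ds (frag_of w)) (box_id G' gr'' dh'' G1 G2 ds w)"
      by (rule tensor_eq_sym[OF box_id_tensor_eq_box_id_deg[OF ainf_morphism_homogM2[OF G] ds_hom]])
    ultimately show "?te (box_id_deg G G' (dh x) G1 G2 ds (frag_of w)) (box_id G' gr'' dh'' G1 G2 ds w)"
      by simp
  qed
  also have "\<dots> = typeD_comp (box_id G' gr'' dh'' G1 G2 ds) (box_id G' gr' dh' F1 (\<lambda>z b. 0) ds) x"
    by (rule typeD_comp_box_id_zero[symmetric])
  finally show ?thesis .
qed

lemma box_id_ainf_comp_strict_second:
  assumes F: "ainf_morphism G mu1 e k gr dh m2 m1 gr' dh' m2' m1' F1 F2"
    and G: "ainf_morphism G mu1 e k gr' dh' m2' m1' gr'' dh'' m2'' m1'' G1 (\<lambda>z b. 0)"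
    and ds_hom: "\<And>a c. (a, c) \<in> set ds \<Longrightarrow> \<exists>q. a \<in> G q (hdeg G a)"
  shows "tensor_eq (\<lambda>c i. c * e' i) (\<lambda>i z. m2'' z (e i)) k
           (box_id G' gr'' dh'' (ainf_comp1 G1 F1) (ainf_comp2 G1 (\<lambda>z b. 0) F1 F2) ds x)
           (typeD_comp (box_id G' gr'' dh'' G1 (\<lambda>z b. 0) ds) (box_id G' gr' dh' F1 F2 ds) x)"
proof -
  let ?te = "tensor_eq (\<lambda>c i. c * e' i) (\<lambda>i z. m2'' z (e i)) k" and ?X = "frag_of x"
  have G1_add: "\<And>u v. G1 (u + v) = G1 u + G1 v"
    and G1_idem: "\<And>z i. i < k \<Longrightarrow> G1 (m2' z (e i)) = m2'' (G1 z) (e i)"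
    using ainf_morphism_add1[OF G] ainf_morphism_idem1[OF G] by blast+
  have "?te (box_id G' gr'' dh'' (ainf_comp1 G1 F1) (ainf_comp2 G1 (\<lambda>z b. 0) F1 F2) ds x)
            (box_id_deg G G' (dh x) (ainf_comp1 G1 F1) (ainf_comp2 G1 (\<lambda>z b. 0) F1 F2) ds ?X)"
    by (rule box_id_tensor_eq_box_id_deg[OF ainf_comp2_homogM[OF F G] ds_hom])
  also have "\<dots> = tensor_map id G1 (box_id_deg G G' (dh x) F1 F2 ds ?X)"
    by (simp add: box_id_deg_def ainf_comp1_def ainf_comp2_def tensor_map_def
                  frag_extend_add frag_extend_sum_list split_def)
  also have "?te \<dots> (tensor_map id G1 (box_id G' gr' dh' F1 F2 ds x))"
    using tensor_eq_sym[OF box_id_tensor_eq_box_id_deg[where L = "\<lambda>i z. m2' z (e i)",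
                                                        OF ainf_morphism_homogM2[OF F] ds_hom]]
    by (rule tensor_eq_tensor_map[rotated 4]) (simp_all add: G1_add G1_idem)
  also have "?te \<dots> (typeD_comp (box_id G' gr'' dh'' G1 (\<lambda>z b. 0) ds) (box_id G' gr' dh' F1 F2 ds) x)"
    by (rule tensor_eq_sym, rule typeD_comp_tensor_eq_tensor_map)
       (rule box_id_zero_tensor_eq, rule G1_add)
  finally show ?thesis .
qed

theorem proposition6p51:
  fixes k :: nat
    and GB :: "int \<Rightarrow> int \<Rightarrow> 'b::ring_1 set" and mu1 :: "'b \<Rightarrow> 'b" and e :: "nat \<Rightarrow> 'b"
    and GB' :: "int \<Rightarrow> int \<Rightarrow> 'c::ring_1 set" and mu1' :: "'c \<Rightarrow> 'c" and e' :: "nat \<Rightarrow> 'c"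
    and gr :: "'x \<Rightarrow> int" and dh :: "'x \<Rightarrow> int" and idem :: "'x \<Rightarrow> nat"
    and m2 :: "('x \<Rightarrow>\<^sub>0 int) \<Rightarrow> 'b \<Rightarrow> ('x \<Rightarrow>\<^sub>0 int)" and m1 :: "('x \<Rightarrow>\<^sub>0 int) \<Rightarrow> ('x \<Rightarrow>\<^sub>0 int)"
    and gr' :: "'y \<Rightarrow> int" and dh' :: "'y \<Rightarrow> int" and idem' :: "'y \<Rightarrow> nat"
    and m2' :: "('y \<Rightarrow>\<^sub>0 int) \<Rightarrow> 'b \<Rightarrow> ('y \<Rightarrow>\<^sub>0 int)" and m1' :: "('y \<Rightarrow>\<^sub>0 int) \<Rightarrow> ('y \<Rightarrow>\<^sub>0 int)"
    and gr'' :: "'z \<Rightarrow> int" and dh'' :: "'z \<Rightarrow> int" and idem'' :: "'z \<Rightarrow> nat"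
    and m2'' :: "('z \<Rightarrow>\<^sub>0 int) \<Rightarrow> 'b \<Rightarrow> ('z \<Rightarrow>\<^sub>0 int)" and m1'' :: "('z \<Rightarrow>\<^sub>0 int) \<Rightarrow> ('z \<Rightarrow>\<^sub>0 int)"
    and ds :: "('b \<times> 'c) list"
    and F1 :: "('x \<Rightarrow>\<^sub>0 int) \<Rightarrow> ('y \<Rightarrow>\<^sub>0 int)" and F2 :: "('x \<Rightarrow>\<^sub>0 int) \<Rightarrow> 'b \<Rightarrow> ('y \<Rightarrow>\<^sub>0 int)"
    and G1 :: "('y \<Rightarrow>\<^sub>0 int) \<Rightarrow> ('z \<Rightarrow>\<^sub>0 int)" and G2 :: "('y \<Rightarrow>\<^sub>0 int) \<Rightarrow> 'b \<Rightarrow> ('z \<Rightarrow>\<^sub>0 int)"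
  assumes B: "dg_bigraded_algebra GB mu1 e k"
    and B': "dg_bigraded_algebra GB' mu1' e' k"
    and A: "dg_module GB mu1 e k gr dh idem m2 m1"
    and A': "dg_module GB mu1 e k gr' dh' idem' m2' m1'"
    and A'': "dg_module GB mu1 e k gr'' dh'' idem'' m2'' m1''"
    and DD: "DD_identity GB mu1 e GB' mu1' e' k ds"
    and F: "ainf_morphism GB mu1 e k gr dh m2 m1 gr' dh' m2' m1' F1 F2"
    and G: "ainf_morphism GB mu1 e k gr' dh' m2' m1' gr'' dh'' m2'' m1'' G1 G2"
    and F2_or_G2: "F2 = (\<lambda>z b. 0) \<or> G2 = (\<lambda>z b. 0)"
  shows "\<forall>x. tensor_eq (\<lambda>b i. b * e' i) (\<lambda>i z. m2'' z (e i)) k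
           (box_id GB' gr'' dh'' (ainf_comp1 G1 F1) (ainf_comp2 G1 G2 F1 F2) ds x)
           (typeD_comp (box_id GB' gr'' dh'' G1 G2 ds) (box_id GB' gr' dh' F1 F2 ds) x)"
proof -
  have ds_hom: "\<And>a c. (a, c) \<in> set ds \<Longrightarrow> \<exists>q. a \<in> GB q (hdeg GB a)"
    using DD by (rule DD_identity_hdeg_left)
  from F2_or_G2 show ?thesis
  proof
    assume F2: "F2 = (\<lambda>z b. 0)"
    show ?thesis
      unfolding F2 by (intro allI box_id_ainf_comp_strict_first[OF F[unfolded F2] G ds_hom])
  next
    assume G2: "G2 = (\<lambda>z b. 0)"
    show ?thesis
      unfolding G2 by (intro allI box_id_ainf_comp_strict_second[OF F G[unfolded G2] ds_hom])
  qed
qed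

end
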